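(* Let $x_1,\dots,x_n\in\mathbb{R}^p$, let $u_1,\dots,u_s$ be induced points chosen from $\{x_1,\dots,x_n\}$, let $\epsilon>0$ and $\eta_{1,n}>0$, and let $k_{\eta_{1,n}}(x,x')=\exp(-\|x-x'\|^2/(4\epsilon^2))\mathbf 1_{\{\|x-x'\|<\eta_{1,n}\}}$. Define the two-step graph Laplacian $L=I-(Z\Lambda^{-1}Z^\top)^{1/2}$ and the matrices $\tilde Z,\tilde\Lambda$ as in the context (assuming all normalizing sums are positive). Then $L=I-(\tilde Z\tilde\Lambda^{-1}\tilde Z^\top)^{1/2}$.
   Context: Notation $B_{i\cdot}=\sum_jB_{ij}$, $B_{\cdot j}=\sum_iB_{ij}$. For each $i$, $u_{\tau(i)}$ is the nearest induced point to $x_i$ (i.e. $\|u_{\tau(i)}-x_i\|=\min_j\|u_j-x_i\|$), and $n_j=\#\{i:\tau(i)=j\}$. Two-step objects ($1\le i\le n$, $1\le j\le s$): $A_{ij}=\dfrac{n_jk_{\eta_{1,n}}(x_i,u_j)}{\sum_{q=1}^nk_{\eta_{1,n}}(x_q,u_j)\sum_{q=1}^sn_qk_{\eta_{1,n}}(x_i,u_q)}$, $Z_{ij}=A_{ij}/A_{i\cdot}$, $\Lambda=\mathrm{diag}(Z_{\cdot1},\dots,Z_{\cdot s})$, and the square root is the PSD one. Approximated-point-cloud objects ($1\le i,j\le n$): $\tilde K_{ij}=k_{\eta_{1,n}}(x_i,u_{\tau(j)})$, $\tilde A_{ij}=\tilde K_{ij}/(\tilde K_{i\cdot}\tilde K_{\cdot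 j})$, $\tilde Z_{ij}=\tilde A_{ij}/\tilde A_{i\cdot}$, $\tilde\Lambda=\mathrm{diag}(\tilde Z_{\cdot1},\dots,\tilde Z_{\cdot n})$. *)

theory Defs
  imports "HOL-Analysis.Analysis"
begin

definition kern :: "real \<Rightarrow> real \<Rightarrow> real^'p \<Rightarrow> real^'p \<Rightarrow> real" where
  "kern eps eta x y =
     exp (- ((norm (x - y))\<^sup>2) / (4 * eps\<^sup>2)) * (if norm (x - y) < eta then 1 else 0)"

definition row_sum :: "real^'b^'a \<Rightarrow> 'a \<Rightarrow> real" where
  "row_sum B i = (\<Sum>j\<in>UNIV. B $ i $ j)"

definition col_sum :: "real^'b^'a \<Rightarrow> 'b \<Rightarrow> real" where
  "col_sum B j = (\<Sum>i\<in>UNIV. B $ i $ j)"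

definition row_normalize :: "real^'b^'a \<Rightarrow> real^'b^'a" where
  "row_normalize A = (\<chi> i j. A $ i $ j / row_sum A i)"

definition col_diag :: "real^'b^'a \<Rightarrow> real^'b^'b" where
  "col_diag Z = (\<chi> j k. if j = k then col_sum Z j else 0)"

definition ncount :: "('n::finite \<Rightarrow> 's) \<Rightarrow> 's \<Rightarrow> real" where
  "ncount tau j = real (card {i. tau i = j})"

definition A_two :: "real \<Rightarrow> real \<Rightarrow> ('n::finite \<Rightarrow> real^'p) \<Rightarrow> ('s::finite \<Rightarrow> real^'p)
    \<Rightarrow> ('n \<Rightarrow> 's) \<Rightarrow> real^'s^'n" where
  "A_two eps eta x u tau = (\<chi> i j.
     ncount tau j * kern eps eta (x i) (u j) /
     ((\<Sum>q\<in>UNIV. kern eps eta (x q) (u j)) *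
      (\<Sum>q\<in>UNIV. ncount tau q * kern eps eta (x i) (u q))))"

text \<open>Kernel of the approximated point cloud: tilde K_{ij} = k(x_i, u_{tau(j)}).\<close>
definition K_tilde :: "real \<Rightarrow> real \<Rightarrow> ('n::finite \<Rightarrow> real^'p) \<Rightarrow> ('s \<Rightarrow> real^'p)
    \<Rightarrow> ('n \<Rightarrow> 's) \<Rightarrow> real^'n^'n" where
  "K_tilde eps eta x u tau = (\<chi> i j. kern eps eta (x i) (u (tau j)))"

definition A_tilde :: "real \<Rightarrow> real \<Rightarrow> ('n::finite \<Rightarrow> real^'p) \<Rightarrow> ('s \<Rightarrow> real^'p)
    \<Rightarrow> ('n \<Rightarrow> 's) \<Rightarrow> real^'n^'n" where
  "A_tilde eps eta x u tau =
     (let K = K_tilde eps eta x u tau in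
      \<chi> i j. K $ i $ j / (row_sum K i * col_sum K j))"

definition psd :: "real^'n^'n \<Rightarrow> bool" where
  "psd M \<longleftrightarrow> transpose M = M \<and> (\<forall>v. 0 \<le> v \<bullet> (M *v v))"

definition psd_sqrt :: "real^'n^'n \<Rightarrow> real^'n^'n" where
  "psd_sqrt M = (THE R. psd R \<and> R ** R = M)"

definition L_two :: "real \<Rightarrow> real \<Rightarrow> ('n::finite \<Rightarrow> real^'p) \<Rightarrow> ('s::finite \<Rightarrow> real^'p)
    \<Rightarrow> ('n \<Rightarrow> 's) \<Rightarrow> real^'n^'n" where
  "L_two eps eta x u tau =
     (let Z = row_normalize (A_two eps eta x u tau) in
      mat 1 - psd_sqrt (Z ** matrix_inv (col_diag Z) ** transpose Z))"

end

theory Submission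
  imports Defs
begin

text \<open>Every induced point u_j is a data point, hence its own nearest induced point, so tau is
  onto. The columns of tilde K are the kernel columns k(., u_j), the one of u_j repeated n_j times;
  consequently tilde A is the two-step matrix A with column j spread evenly over the fibre
  tau^-1(j), that is tilde A_il = A_i,tau(l) / n_tau(l). Spreading preserves row sums, hence
  commutes with row normalisation, and divides column sums by n_j. As
  (Z Lambda^-1 Z^T)_ik = sum_j Z_ij Z_kj / Z_.j, each fibre contributes n_j copies of
  (Z_ij / n_j) (Z_kj / n_j) / (Z_.j / n_j), which add up to the term for j.\<close>

lemma matrix_inv_eqI:
  fixes A :: "'a::semiring_1^'n^'m" and B :: "'a^'m^'n"
  assumes AB: "A ** B = mat 1" and BA: "B ** A = mat 1"
  shows "matrix_inv A = B"
proof -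
  have "A ** matrix_inv A = mat 1 \<and> matrix_inv A ** A = mat 1"
    unfolding matrix_inv_def by (rule someI[of _ B]) (use AB BA in blast)
  then have "B = (B ** A) ** matrix_inv A"
    by (simp flip: matrix_mul_assoc)
  then show ?thesis
    by (simp add: BA)
qed

lemma matrix_inv_diag:
  fixes d :: "'n::finite \<Rightarrow> 'a::field"
  assumes "\<And>j. d j \<noteq> 0"
  shows "matrix_inv (\<chi> j k. if j = k then d j else 0)
       = (\<chi> j k. if j = k then inverse (d j) else 0)"
  by (rule matrix_inv_eqI)
    (use assms in \<open>simp_all add: matrix_matrix_mult_def mat_def vec_eq_iff
       if_distrib[of "\<lambda>x. x * _"] cong: if_cong\<close>)

lemma gram_col_diag_eq:
  fixes Z :: "real^'b::finite^'a::finite"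
  assumes "\<And>j. col_sum Z j \<noteq> 0"
  shows "Z ** matrix_inv (col_diag Z) ** transpose Z
       = (\<chi> i k. \<Sum>j\<in>UNIV. Z $ i $ j * Z $ k $ j / col_sum Z j)"
proof -
  have "matrix_inv (col_diag Z) = (\<chi> j k. if j = k then inverse (col_sum Z j) else 0)"
    unfolding col_diag_def using assms by (rule matrix_inv_diag)
  then show ?thesis
    by (simp add: matrix_matrix_mult_def transpose_def vec_eq_iff if_distrib[of "\<lambda>x. _ * x"]
        sum_distrib_right divide_inverse mult_ac cong: if_cong)
qed

lemma nearest_point_map_surj:
  fixes x :: "'n \<Rightarrow> 'v::real_normed_vector" and u :: "'s::finite \<Rightarrow> 'v"
  assumes u_from_x: "\<forall>j. \<exists>i. u j = x i"
    and u_inj: "inj u"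
    and tau_nearest: "\<forall>i. norm (u (tau i) - x i) = Min (range (\<lambda>j. norm (u j - x i)))"
  shows "surj tau"
  unfolding surj_def
proof
  fix j
  obtain i where ui: "u j = x i"
    using u_from_x by blast
  have "norm (u (tau i) - x i) \<le> norm (u j - x i)"
    unfolding tau_nearest[rule_format] by (rule Min_le) auto
  then have "u (tau i) = u j"
    by (simp add: ui)
  then show "\<exists>i. j = tau i"
    using u_inj by (metis injD)
qed

lemma ncount_pos:
  assumes "surj tau"
  shows "0 < ncount tau j"
proof -
  obtain i where "tau i = j"
    using assms by (metis surjD)
  then show ?thesis
    unfolding ncount_def by (auto simp: card_gt_0_iff)
qed

lemma sum_comp_eq_sum_ncount:
  fixes tau :: "'n::finite \<Rightarrow> 's::finite" and f :: "'s \<Rightarrow> real"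
  shows "(\<Sum>l\<in>UNIV. f (tau l)) = (\<Sum>j\<in>UNIV. ncount tau j * f j)"
proof -
  have "(\<Sum>l\<in>UNIV. f (tau l)) = (\<Sum>j\<in>UNIV. \<Sum>l\<in>{l. l \<in> UNIV \<and> tau l = j}. f (tau l))"
    by (rule sum.group[symmetric]) auto
  also have "\<dots> = (\<Sum>j\<in>UNIV. ncount tau j * f j)"
    by (rule sum.cong) (auto simp: ncount_def)
  finally show ?thesis .
qed

lemma sum_comp_divide_ncount:
  fixes tau :: "'n::finite \<Rightarrow> 's::finite" and f :: "'s \<Rightarrow> real"
  assumes "surj tau"
  shows "(\<Sum>l\<in>UNIV. f (tau l) / ncount tau (tau l)) = (\<Sum>j\<in>UNIV. f j)"
proof -
  have "ncount tau j \<noteq> 0" for j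
    using ncount_pos[OF assms] by (metis less_irrefl)
  then show ?thesis
    by (simp add: sum_comp_eq_sum_ncount[of "\<lambda>j. f j / ncount tau j"])
qed

definition spread_cols :: "('n::finite \<Rightarrow> 's) \<Rightarrow> real^'s^'m \<Rightarrow> real^'n^'m" where
  "spread_cols tau A = (\<chi> i l. A $ i $ tau l / ncount tau (tau l))"

lemma row_sum_spread_cols:
  assumes "surj tau"
  shows "row_sum (spread_cols tau A) i = row_sum A i"
  unfolding row_sum_def spread_cols_def using sum_comp_divide_ncount[OF assms] by simp

lemma col_sum_spread_cols:
  "col_sum (spread_cols tau A) l = col_sum A (tau l) / ncount tau (tau l)"
  unfolding col_sum_def spread_cols_def by (simp add: sum_divide_distrib)

lemma row_normalize_spread_cols:
  assumes "surj tau"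
  shows "row_normalize (spread_cols tau A) = spread_cols tau (row_normalize A)"
  unfolding row_normalize_def row_sum_spread_cols[OF assms]
  by (simp add: spread_cols_def vec_eq_iff)

lemma gram_spread_cols:
  fixes tau :: "'n::finite \<Rightarrow> 's::finite" and Z :: "real^'s^'m::finite"
  assumes tau_surj: "surj tau" and col_nz: "\<And>j. col_sum Z j \<noteq> 0"
  shows "spread_cols tau Z ** matrix_inv (col_diag (spread_cols tau Z)) ** transpose (spread_cols tau Z)
       = Z ** matrix_inv (col_diag Z) ** transpose Z"
proof -
  let ?Y = "spread_cols tau Z"
  have n_pos: "\<And>l. 0 < ncount tau (tau l)"
    using ncount_pos[OF tau_surj] by blast
  have col_nz_spread: "col_sum ?Y l \<noteq> 0" for l
    using col_nz n_pos[of l] by (simp add: col_sum_spread_cols)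
  have "?Y $ i $ l * ?Y $ k $ l / col_sum ?Y l
      = (Z $ i $ tau l * Z $ k $ tau l / col_sum Z (tau l)) / ncount tau (tau l)" for i k l
    using n_pos[of l] unfolding col_sum_spread_cols by (simp add: spread_cols_def field_simps)
  then have "(\<Sum>l\<in>UNIV. ?Y $ i $ l * ?Y $ k $ l / col_sum ?Y l)
           = (\<Sum>j\<in>UNIV. Z $ i $ j * Z $ k $ j / col_sum Z j)" for i k
    using sum_comp_divide_ncount[OF tau_surj, of "\<lambda>j. Z $ i $ j * Z $ k $ j / col_sum Z j"]
    by simp
  then show ?thesis
    by (simp add: gram_col_diag_eq col_nz col_nz_spread)
qed

lemma A_tilde_eq_spread_cols:
  "A_tilde eps eta x u tau = spread_cols tau (A_two eps eta x u tau)"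
proof -
  let ?K = "K_tilde eps eta x u tau"
  have "row_sum ?K i = (\<Sum>q\<in>UNIV. ncount tau q * kern eps eta (x i) (u q))" for i
    unfolding row_sum_def K_tilde_def
    by (simp add: sum_comp_eq_sum_ncount[of "\<lambda>j. kern eps eta (x i) (u j)"])
  moreover have "col_sum ?K l = (\<Sum>q\<in>UNIV. kern eps eta (x q) (u (tau l)))" for l
    unfolding col_sum_def K_tilde_def by simp
  moreover have "ncount tau (tau l) \<noteq> 0" for l
    unfolding ncount_def by (auto simp: card_gt_0_iff)
  ultimately show ?thesis
    unfolding A_tilde_def A_two_def spread_cols_def Let_def
    by (simp add: vec_eq_iff K_tilde_def field_simps)
qed

theorem lemma1:
  fixes x :: "'n::finite \<Rightarrow> real^'p"
    and u :: "'s::finite \<Rightarrow> real^'p"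
    and tau :: "'n \<Rightarrow> 's"
    and eps eta :: real
  assumes eps_pos: "eps > 0"
    and eta_pos: "eta > 0"
    and u_from_x: "\<forall>j. \<exists>i. u j = x i"
    and u_inj: "inj u"
    and tau_nearest: "\<forall>i. norm (u (tau i) - x i) = Min (range (\<lambda>j. norm (u j - x i)))"
    and pos1: "\<forall>j. (\<Sum>q\<in>UNIV. kern eps eta (x q) (u j)) > 0"
    and pos2: "\<forall>i. (\<Sum>q\<in>UNIV. ncount tau q * kern eps eta (x i) (u q)) > 0"
    and pos3: "\<forall>i. row_sum (A_two eps eta x u tau) i > 0"
    and pos4: "\<forall>j. col_sum (row_normalize (A_two eps eta x u tau)) j > 0"
    and pos5: "\<forall>i. row_sum (K_tilde eps eta x u tau) i > 0"
    and pos6: "\<forall>j. col_sum (K_tilde eps eta x u tau) j > 0"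
    and pos7: "\<forall>i. row_sum (A_tilde eps eta x u tau) i > 0"
    and pos8: "\<forall>j. col_sum (row_normalize (A_tilde eps eta x u tau)) j > 0"
  shows "L_two eps eta x u tau =
    mat 1 - psd_sqrt (row_normalize (A_tilde eps eta x u tau)
                      ** matrix_inv (col_diag (row_normalize (A_tilde eps eta x u tau)))
                      ** transpose (row_normalize (A_tilde eps eta x u tau)))"
proof -
  let ?Z = "row_normalize (A_two eps eta x u tau)"
  have tau_surj: "surj tau"
    using nearest_point_map_surj[OF u_from_x u_inj tau_nearest] .
  have "row_normalize (A_tilde eps eta x u tau) = spread_cols tau ?Z"
    by (simp add: A_tilde_eq_spread_cols row_normalize_spread_cols[OF tau_surj])
  moreover have "col_sum ?Z j \<noteq> 0" for j
    using pos4 by (metis less_irrefl)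
  ultimately show ?thesis
    unfolding L_two_def Let_def by (simp add: gram_spread_cols[OF tau_surj])
qed

end
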